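(* Let $1 \to N \xrightarrow{i} G \xrightarrow{p} Q \to 1$ be a short exact sequence of groups, where $Q$ is arbitrary and $\nu(N) = 0$. Then $\nu(G) \le \nu(Q)$, with equality if the extension is split or central.
   Context: For a group $G$, the free subgroup rank is $\nu(G) = \max\{ n \ge 0 : (F_2)^n \text{ embeds into } G\} \in \mathbb{N}_0 \cup \{\infty\}$, where $F_2$ is the free group of rank two and $(F_2)^n$ is the $n$-fold direct product. The extension is central if $i(N)$ lies in the center of $G$, and split if $p$ admits a homomorphic section $Q \to G$. *)

theory Defs
  imports "HOL-Algebra.Algebra" "HOL-Library.Extended_Nat"
begin

text \<open>Letters are pairs (generator, inverted?), generators indexed by bool.
  Elements of F2 are freely reduced words; multiplication is concatenation
  followed by free reduction.\<close>

fun free_reduce :: "(bool \<times> bool) list \<Rightarrow> (bool \<times> bool) list" where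
  "free_reduce [] = []"
| "free_reduce (x # xs) =
     (case free_reduce xs of
        [] \<Rightarrow> [x]
      | y # ys \<Rightarrow> (if fst x = fst y \<and> snd x \<noteq> snd y then ys else x # y # ys))"

definition F2 :: "(bool \<times> bool) list monoid" where
  "F2 = \<lparr>carrier = {w. free_reduce w = w},
         monoid.mult = (\<lambda>u v. free_reduce (u @ v)),
         one = []\<rparr>"

definition F2_power_embeds :: "nat \<Rightarrow> ('a, 'm) monoid_scheme \<Rightarrow> bool" where
  "F2_power_embeds n G \<longleftrightarrow>
     (\<exists>h. h \<in> hom (product_group {..<n} (\<lambda>_. F2)) G \<and>
          inj_on h (carrier (product_group {..<n} (\<lambda>_. F2))))"

definition free_subgroup_rank :: "('a, 'm) monoid_scheme \<Rightarrow> enat" where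
  "free_subgroup_rank G = Sup (enat ` {n. F2_power_embeds n G})"

definition short_exact ::
  "('n, 'a) monoid_scheme \<Rightarrow> ('g, 'b) monoid_scheme \<Rightarrow> ('q, 'c) monoid_scheme
     \<Rightarrow> ('n \<Rightarrow> 'g) \<Rightarrow> ('g \<Rightarrow> 'q) \<Rightarrow> bool" where
  "short_exact N G Q i p \<longleftrightarrow>
     group N \<and> group G \<and> group Q \<and>
     i \<in> hom N G \<and> inj_on i (carrier N) \<and>
     p \<in> hom G Q \<and> p ` carrier G = carrier Q \<and>
     i ` carrier N = kernel G Q p"

definition central_ext ::
  "('n, 'a) monoid_scheme \<Rightarrow> ('g, 'b) monoid_scheme \<Rightarrow> ('n \<Rightarrow> 'g) \<Rightarrow> bool" where
  "central_ext N G i \<longleftrightarrow>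
     (\<forall>x \<in> i ` carrier N. \<forall>g \<in> carrier G. x \<otimes>\<^bsub>G\<^esub> g = g \<otimes>\<^bsub>G\<^esub> x)"

definition split_ext ::
  "('g, 'b) monoid_scheme \<Rightarrow> ('q, 'c) monoid_scheme \<Rightarrow> ('g \<Rightarrow> 'q) \<Rightarrow> bool" where
  "split_ext G Q p \<longleftrightarrow> (\<exists>s. s \<in> hom Q G \<and> (\<forall>q \<in> carrier Q. p (s q) = q))"

end

theory Submission
  imports Defs
begin

text \<open>A copy of \<open>F2\<^sup>n\<close> in \<open>G\<close> maps injectively to \<open>Q\<close>: otherwise the kernel of \<open>p\<close> on it is a
  non-trivial normal subgroup of \<open>F2\<^sup>n\<close>. As \<open>F2\<close> has trivial center, commutators with one factor
  produce a non-trivial normal subgroup of that factor, and every such subgroup of \<open>F2\<close> contains a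
  copy of \<open>F2\<close>, generated by two products of conjugates of a cyclically reduced word. That copy would
  lie in \<open>i(N)\<close>, contradicting \<open>\<nu>(N) = 0\<close>.

  Conversely, a copy of \<open>F2\<^sup>n\<close> in \<open>Q\<close> lifts along a section in the split case. In the central case
  lifts of different factors commute up to central elements. Precomposing each lift with the
  injective endomorphism \<open>a \<mapsto> [a, b], b \<mapsto> [a\<inverse>, b\<inverse>]\<close> of \<open>F2\<close> makes them commute exactly,
  because commutators of elements that commute modulo the center commute; the product of these lifts
  then embeds \<open>F2\<^sup>n\<close> into \<open>G\<close>.\<close>

section \<open>Reduced words\<close>

definition inv_letter :: "bool \<times> bool \<Rightarrow> bool \<times> bool" where
  "inv_letter x = (fst x, \<not> snd x)"

lemma inv_letter_inv_letter [simp]: "inv_letter (inv_letter x) = x"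
  by (simp add: inv_letter_def)

lemma inv_letter_neq [simp]: "inv_letter x \<noteq> x" "x \<noteq> inv_letter x"
  by (auto simp: inv_letter_def prod_eq_iff)

lemma inv_letter_eq_iff [simp]: "inv_letter a = inv_letter b \<longleftrightarrow> a = b"
  by (metis inv_letter_inv_letter)

lemma inv_letter_Pair [simp]: "inv_letter (a, b) = (a, \<not> b)"
  by (simp add: inv_letter_def)

lemma inv_letter_eqD: "inv_letter a = b \<Longrightarrow> a = inv_letter b"
  by auto

lemma exists_letter_avoiding: "\<exists>x::bool \<times> bool. x \<noteq> a \<and> x \<noteq> b \<and> x \<noteq> c"
proof (rule ccontr)
  assume "\<not> ?thesis"
  then have "UNIV \<subseteq> {a, b, c}"
    by auto
  then have "card (UNIV :: (bool \<times> bool) set) \<le> card {a, b, c}"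
    by (intro card_mono) auto
  also have "card {a, b, c} \<le> 3"
    by (simp add: card_insert_if)
  finally show False
    by (simp add: UNIV_Times_UNIV[symmetric] card_cartesian_product del: UNIV_Times_UNIV)
qed

fun reduced :: "(bool \<times> bool) list \<Rightarrow> bool" where
  "reduced [] = True"
| "reduced [x] = True"
| "reduced (x # y # ys) = (y \<noteq> inv_letter x \<and> reduced (y # ys))"

lemma reduced_Cons: "reduced (x # ys) \<longleftrightarrow> reduced ys \<and> (ys = [] \<or> hd ys \<noteq> inv_letter x)"
  by (cases ys) auto

lemma reduced_ConsD: "reduced (x # xs) \<Longrightarrow> reduced xs"
  by (cases xs) auto

lemma reduced_append:
  "reduced (xs @ ys) \<longleftrightarrow>
     reduced xs \<and> reduced ys \<and> (xs = [] \<or> ys = [] \<or> hd ys \<noteq> inv_letter (last xs))"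
proof (induction xs)
  case (Cons x xs)
  then show ?case
    by (cases xs) (auto simp: reduced_Cons)
qed simp

definition cancel_cons :: "bool \<times> bool \<Rightarrow> (bool \<times> bool) list \<Rightarrow> (bool \<times> bool) list" where
  "cancel_cons x r = (case r of [] \<Rightarrow> [x] | y # ys \<Rightarrow> if y = inv_letter x then ys else x # y # ys)"

lemma free_reduce_Cons: "free_reduce (x # xs) = cancel_cons x (free_reduce xs)"
proof -
  have "(fst x = fst y \<and> snd x \<noteq> snd y) \<longleftrightarrow> y = inv_letter x" for y :: "bool \<times> bool"
    by (cases x; cases y) (auto simp: inv_letter_def)
  then show ?thesis
    unfolding cancel_cons_def by (simp only: free_reduce.simps(2))
qed

declare free_reduce.simps(2) [simp del]

lemma reduced_cancel_cons: "reduced r \<Longrightarrow> reduced (cancel_cons x r)"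
  by (cases r rule: reduced.cases) (auto simp: cancel_cons_def)

lemma reduced_free_reduce: "reduced (free_reduce w)"
  by (induction w) (auto simp: free_reduce_Cons reduced_cancel_cons)

lemma free_reduce_reduced: "reduced w \<Longrightarrow> free_reduce w = w"
proof (induction w)
  case (Cons x xs)
  then have "free_reduce xs = xs"
    using reduced_ConsD by blast
  then show ?case
    using Cons.prems by (cases xs) (auto simp: free_reduce_Cons cancel_cons_def)
qed simp

lemma free_reduce_id_iff: "free_reduce w = w \<longleftrightarrow> reduced w"
  using reduced_free_reduce free_reduce_reduced by metis

lemma free_reduce_append: "free_reduce (xs @ ys) = foldr cancel_cons xs (free_reduce ys)"
  by (induction xs) (auto simp: free_reduce_Cons)

lemma free_reduce_eq_foldr: "free_reduce w = foldr cancel_cons w []"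
  using free_reduce_append[of w "[]"] by simp

lemma cancel_cons_inv_letter: "reduced s \<Longrightarrow> cancel_cons x (cancel_cons (inv_letter x) s) = s"
  by (cases s rule: reduced.cases) (auto simp: cancel_cons_def)

lemma reduced_foldr_cancel_cons: "reduced r \<Longrightarrow> reduced (foldr cancel_cons xs r)"
  by (induction xs) (auto simp: reduced_cancel_cons)

lemma foldr_cancel_cons_free_reduce:
  "reduced r \<Longrightarrow> foldr cancel_cons (free_reduce xs) r = foldr cancel_cons xs r"
proof (induction xs)
  case (Cons x xs)
  have "foldr cancel_cons (cancel_cons x R) r = cancel_cons x (foldr cancel_cons R r)"
    if "reduced R" for R
  proof (cases R)
    case (Cons y ys)
    then show ?thesis
      using cancel_cons_inv_letter[OF reduced_foldr_cancel_cons[OF \<open>reduced r\<close>], of x ys]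
      by (auto simp: cancel_cons_def)
  qed (simp add: cancel_cons_def)
  then show ?case
    using Cons by (simp add: free_reduce_Cons reduced_free_reduce)
qed simp

lemma free_reduce_free_reduce_left: "free_reduce (free_reduce xs @ ys) = free_reduce (xs @ ys)"
  by (simp add: free_reduce_append foldr_cancel_cons_free_reduce reduced_free_reduce)

lemma free_reduce_free_reduce_right: "free_reduce (xs @ free_reduce ys) = free_reduce (xs @ ys)"
  by (simp add: free_reduce_append free_reduce_reduced reduced_free_reduce)

definition word_inv :: "(bool \<times> bool) list \<Rightarrow> (bool \<times> bool) list" where
  "word_inv w = rev (map inv_letter w)"

lemma word_inv_Nil [simp]: "word_inv [] = []"
  and word_inv_Cons: "word_inv (x # w) = word_inv w @ [inv_letter x]"
  by (auto simp: word_inv_def)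

lemma word_inv_eq_Nil_iff [simp]: "word_inv w = [] \<longleftrightarrow> w = []"
  by (simp add: word_inv_def)

lemma hd_word_inv: "w \<noteq> [] \<Longrightarrow> hd (word_inv w) = inv_letter (last w)"
  by (simp add: word_inv_def hd_rev last_map)

lemma last_word_inv: "w \<noteq> [] \<Longrightarrow> last (word_inv w) = inv_letter (hd w)"
  by (simp add: word_inv_def last_rev hd_map)

lemma reduced_word_inv: "reduced w \<Longrightarrow> reduced (word_inv w)"
proof (induction w)
  case (Cons x w)
  then show ?case
    by (cases w) (auto simp: word_inv_Cons reduced_append hd_word_inv last_word_inv)
qed simp

lemma free_reduce_word_inv_append: "free_reduce (word_inv w @ w) = []"
proof -
  have "foldr cancel_cons (word_inv w) (foldr cancel_cons w s) = s" if "reduced s" for s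
    using that
  proof (induction w arbitrary: s)
    case (Cons x w)
    then show ?case
      using cancel_cons_inv_letter[OF reduced_foldr_cancel_cons[OF Cons.prems], of "inv_letter x" w]
      by (simp add: word_inv_Cons)
  qed simp
  from this[of "[]"] show ?thesis
    by (simp add: free_reduce_append free_reduce_eq_foldr)
qed

lemma F2_carrier: "carrier F2 = {w. reduced w}"
  by (simp add: F2_def free_reduce_id_iff)

lemma F2_mult: "x \<otimes>\<^bsub>F2\<^esub> y = free_reduce (x @ y)"
  by (simp add: F2_def)

lemma F2_one: "\<one>\<^bsub>F2\<^esub> = []"
  by (simp add: F2_def)

lemma group_F2: "group F2"
proof (rule groupI)
  fix x assume "x \<in> carrier F2"
  then show "\<exists>y\<in>carrier F2. y \<otimes>\<^bsub>F2\<^esub> x = \<one>\<^bsub>F2\<^esub>"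
    by (intro bexI[of _ "free_reduce (word_inv x)"])
       (simp_all add: F2_carrier F2_mult F2_one reduced_free_reduce
         free_reduce_free_reduce_left free_reduce_word_inv_append)
qed (simp_all add: F2_carrier F2_mult F2_one reduced_free_reduce free_reduce_reduced
       free_reduce_free_reduce_left free_reduce_free_reduce_right)

interpretation F2: group F2
  by (rule group_F2)

lemma F2_inv: "reduced w \<Longrightarrow> inv\<^bsub>F2\<^esub> w = word_inv w"
  by (rule F2.inv_equality)
     (auto simp: F2_carrier F2_mult F2_one free_reduce_word_inv_append reduced_word_inv)

lemma F2_mult_reduced: "reduced (u @ v) \<Longrightarrow> u \<otimes>\<^bsub>F2\<^esub> v = u @ v"
  by (simp add: F2_mult free_reduce_reduced)

lemma F2_letter_closed [simp]: "[x] \<in> carrier F2"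
  by (simp add: F2_carrier)

section \<open>Commutators and centralizers\<close>

definition commutator :: "('a, 'm) monoid_scheme \<Rightarrow> 'a \<Rightarrow> 'a \<Rightarrow> 'a" where
  "commutator G x y = x \<otimes>\<^bsub>G\<^esub> y \<otimes>\<^bsub>G\<^esub> inv\<^bsub>G\<^esub> x \<otimes>\<^bsub>G\<^esub> inv\<^bsub>G\<^esub> y"

definition centralizer :: "('a, 'm) monoid_scheme \<Rightarrow> 'a set \<Rightarrow> 'a set" where
  "centralizer G S = {z \<in> carrier G. \<forall>s\<in>S. z \<otimes>\<^bsub>G\<^esub> s = s \<otimes>\<^bsub>G\<^esub> z}"

abbreviation center :: "('a, 'm) monoid_scheme \<Rightarrow> 'a set" where
  "center G \<equiv> centralizer G (carrier G)"

context group
begin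

lemma inv_mult_cancel_left [simp]: "x \<in> carrier G \<Longrightarrow> y \<in> carrier G \<Longrightarrow> inv x \<otimes> (x \<otimes> y) = y"
  and mult_inv_cancel_left [simp]: "x \<in> carrier G \<Longrightarrow> y \<in> carrier G \<Longrightarrow> x \<otimes> (inv x \<otimes> y) = y"
  by (simp_all add: m_assoc[symmetric])

lemma commutator_closed [intro, simp]:
  "x \<in> carrier G \<Longrightarrow> y \<in> carrier G \<Longrightarrow> commutator G x y \<in> carrier G"
  by (simp add: commutator_def)

lemma commutator_eq_one_iff:
  assumes "x \<in> carrier G" "y \<in> carrier G"
  shows "commutator G x y = \<one> \<longleftrightarrow> x \<otimes> y = y \<otimes> x"
proof -
  have "commutator G x y \<otimes> (y \<otimes> x) = x \<otimes> y"
    using assms by (simp add: commutator_def m_assoc)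
  then show ?thesis
    using r_cancel_one[of "y \<otimes> x" "commutator G x y"] assms by auto
qed

lemma inv_commute:
  assumes "x \<in> carrier G" "y \<in> carrier G" "x \<otimes> y = y \<otimes> x"
  shows "inv x \<otimes> y = y \<otimes> inv x"
proof -
  have "inv x \<otimes> y = inv x \<otimes> (y \<otimes> x) \<otimes> inv x"
    using assms(1,2) by (simp add: m_assoc)
  also have "\<dots> = inv x \<otimes> (x \<otimes> y) \<otimes> inv x"
    by (simp only: assms(3))
  also have "\<dots> = y \<otimes> inv x"
    using assms(1,2) by simp
  finally show ?thesis .
qed

lemma mult_commute:
  assumes "x \<in> carrier G" "y \<in> carrier G" "s \<in> carrier G"
    and "x \<otimes> s = s \<otimes> x" "y \<otimes> s = s \<otimes> y"
  shows "x \<otimes> y \<otimes> s = s \<otimes> (x \<otimes> y)"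
proof -
  have "x \<otimes> y \<otimes> s = x \<otimes> (s \<otimes> y)"
    using assms by (simp add: m_assoc)
  also have "\<dots> = s \<otimes> (x \<otimes> y)"
    using assms by (simp add: m_assoc[symmetric])
  finally show ?thesis .
qed

lemma subgroup_centralizer: "S \<subseteq> carrier G \<Longrightarrow> subgroup (centralizer G S) G"
  by (rule subgroupI) (auto simp: centralizer_def subset_eq inv_commute mult_commute)

lemma center_commute: "z \<in> center G \<Longrightarrow> g \<in> carrier G \<Longrightarrow> z \<otimes> g = g \<otimes> z"
  by (simp add: centralizer_def)

lemma inv_commutator:
  "x \<in> carrier G \<Longrightarrow> y \<in> carrier G \<Longrightarrow> inv (commutator G x y) = commutator G y x"
  by (simp add: commutator_def inv_mult_group m_assoc)

lemma center_inv: "z \<in> center G \<Longrightarrow> inv z \<in> center G"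
  by (rule subgroup.m_inv_closed[OF subgroup_centralizer]) auto

lemma commutator_mult_left_center:
  assumes "u \<in> carrier G" "v \<in> carrier G" "b \<in> carrier G" "commutator G v b \<in> center G"
  shows "commutator G (u \<otimes> v) b = commutator G v b \<otimes> commutator G u b"
proof -
  have "commutator G (u \<otimes> v) b = u \<otimes> commutator G v b \<otimes> inv u \<otimes> commutator G u b"
    using assms(1-3) by (simp add: commutator_def m_assoc inv_mult_group)
  also have "u \<otimes> commutator G v b = commutator G v b \<otimes> u"
    using assms by (simp add: center_commute)
  finally show ?thesis
    using assms(1-3) by (simp add: m_assoc)
qed

lemma commutator_inv_left_center:
  assumes "y \<in> carrier G" "b \<in> carrier G" "commutator G y b \<in> center G"
  shows "commutator G (inv y) b = inv (commutator G y b)"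
proof -
  have "commutator G (inv y) b = inv y \<otimes> inv (commutator G y b) \<otimes> y"
    using assms(1,2) by (simp add: commutator_def m_assoc inv_mult_group)
  also have "inv y \<otimes> inv (commutator G y b) = inv (commutator G y b) \<otimes> inv y"
    using assms center_inv by (simp add: center_commute)
  finally show ?thesis
    using assms(1,2) by (simp add: m_assoc)
qed

lemma commutator_conj:
  assumes "g \<in> carrier G" "x \<in> carrier G" "y \<in> carrier G"
  shows "commutator G (inv g \<otimes> x \<otimes> g) (inv g \<otimes> y \<otimes> g) = inv g \<otimes> commutator G x y \<otimes> g"
  using assms by (simp add: commutator_def inv_mult_group m_assoc)

text \<open>Commutation with \<open>b\<close> modulo the center is a homomorphism on the elements whose commutator
  with \<open>b\<close> is central, and it takes values in an abelian group.\<close>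

lemma commutator_commute_of_center:
  assumes x: "x1 \<in> carrier G" "x2 \<in> carrier G" and b: "b \<in> carrier G"
    and c: "commutator G x1 b \<in> center G" "commutator G x2 b \<in> center G"
  shows "commutator G x1 x2 \<otimes> b = b \<otimes> commutator G x1 x2"
proof -
  define c1 c2 where "c1 = commutator G x1 b" and "c2 = commutator G x2 b"
  have cc: "c1 \<in> carrier G" "c2 \<in> carrier G" "c1 \<otimes> c2 = c2 \<otimes> c1"
    using c x b by (auto simp: c1_def c2_def center_commute)
  have inv: "commutator G (inv x1) b = inv c1" "commutator G (inv x2) b = inv c2"
    using x b c by (simp_all add: c1_def c2_def commutator_inv_left_center)
  have "commutator G (x1 \<otimes> x2) b = c2 \<otimes> c1"
    using x b c by (simp add: commutator_mult_left_center c1_def c2_def)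
  then have "commutator G (x1 \<otimes> x2 \<otimes> inv x1) b = inv c1 \<otimes> (c2 \<otimes> c1)"
    using x b c center_inv by (simp add: commutator_mult_left_center inv c1_def)
  then have "commutator G (commutator G x1 x2) b = inv c2 \<otimes> (inv c1 \<otimes> (c2 \<otimes> c1))"
    unfolding commutator_def[of G x1 x2] using x b c center_inv
    by (simp add: commutator_mult_left_center inv c2_def)
  also have "\<dots> = \<one>"
    using cc by (simp flip: cc(3))
  finally show ?thesis
    using x b by (simp add: commutator_eq_one_iff)
qed

lemma commutators_commute_of_center:
  assumes "x1 \<in> carrier G" "x2 \<in> carrier G" "y1 \<in> carrier G" "y2 \<in> carrier G"
    and center: "\<And>x y. x \<in> {x1, x2} \<Longrightarrow> y \<in> {y1, y2} \<Longrightarrow> commutator G x y \<in> center G"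
  shows "commutator G x1 x2 \<otimes> commutator G y1 y2 = commutator G y1 y2 \<otimes> commutator G x1 x2"
proof -
  have carrier: "x \<in> carrier G" "y \<in> carrier G" if "x \<in> {x1, x2}" "y \<in> {y1, y2}" for x y
    using that assms(1-4) by auto
  have "commutator G y x \<in> center G" if "x \<in> {x1, x2}" "y \<in> {y1, y2}" for x y
    using center_inv[OF center[OF that]] inv_commutator carrier[OF that] by simp
  then have commute: "commutator G y1 y2 \<otimes> x = x \<otimes> commutator G y1 y2" if "x \<in> {x1, x2}" for x
    using that assms(3,4) carrier[OF that] by (intro commutator_commute_of_center) auto
  have "commutator G x (commutator G y1 y2) \<in> center G" if "x \<in> {x1, x2}" for x
  proof -
    have "x \<in> carrier G"
      using that assms(1,2) by auto
    then have "commutator G x (commutator G y1 y2) = \<one>"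
      using commute[OF that] assms(3,4) by (simp add: commutator_eq_one_iff)
    then show ?thesis
      using subgroup.one_closed[OF subgroup_centralizer[of "carrier G"]] by simp
  qed
  then show ?thesis
    using assms(1-4) by (intro commutator_commute_of_center) auto
qed

end

lemma (in group_hom) hom_commutator:
  "x \<in> carrier G \<Longrightarrow> y \<in> carrier G \<Longrightarrow> h (commutator G x y) = commutator H (h x) (h y)"
  by (simp add: commutator_def)

section \<open>The universal property of \<open>F2\<close>\<close>

abbreviation F2_gen :: "bool \<Rightarrow> (bool \<times> bool) list" where
  "F2_gen t \<equiv> [(t, False)]"

definition letter_val :: "('a, 'm) monoid_scheme \<Rightarrow> (bool \<Rightarrow> 'a) \<Rightarrow> bool \<times> bool \<Rightarrow> 'a" where
  "letter_val G f x = (if snd x then inv\<^bsub>G\<^esub> (f (fst x)) else f (fst x))"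

definition F2_lift :: "('a, 'm) monoid_scheme \<Rightarrow> (bool \<Rightarrow> 'a) \<Rightarrow> (bool \<times> bool) list \<Rightarrow> 'a" where
  "F2_lift G f w = foldr (\<lambda>x acc. letter_val G f x \<otimes>\<^bsub>G\<^esub> acc) w \<one>\<^bsub>G\<^esub>"

lemma F2_lift_Nil [simp]: "F2_lift G f [] = \<one>\<^bsub>G\<^esub>"
  and F2_lift_Cons: "F2_lift G f (x # w) = letter_val G f x \<otimes>\<^bsub>G\<^esub> F2_lift G f w"
  by (simp_all add: F2_lift_def)

context group
begin

lemma letter_val_closed: "range f \<subseteq> carrier G \<Longrightarrow> letter_val G f x \<in> carrier G"
  by (auto simp: letter_val_def)

lemma F2_lift_closed: "range f \<subseteq> carrier G \<Longrightarrow> F2_lift G f w \<in> carrier G"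
  by (induction w) (auto simp: F2_lift_Cons letter_val_closed)

lemma F2_lift_in_subgroup:
  assumes "subgroup K G" "range f \<subseteq> K"
  shows "F2_lift G f w \<in> K"
proof (induction w)
  case (Cons x w)
  have "f (fst x) \<in> K"
    using assms(2) by auto
  then have "letter_val G f x \<in> K"
    using assms(1) by (simp add: letter_val_def subgroup.m_inv_closed)
  then show ?case
    using Cons assms(1) by (simp add: F2_lift_Cons subgroup.m_closed)
qed (simp add: assms subgroup.one_closed)

lemma F2_lift_gen: "range f \<subseteq> carrier G \<Longrightarrow> F2_lift G f (F2_gen t) = f t"
  by (simp add: F2_lift_Cons letter_val_def subset_eq)

lemma F2_lift_cancel_cons:
  assumes "range f \<subseteq> carrier G"
  shows "F2_lift G f (cancel_cons x r) = letter_val G f x \<otimes> F2_lift G f r"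
proof (cases r)
  case (Cons y ys)
  have "f (fst x) \<in> carrier G"
    using assms by auto
  then have "letter_val G f x \<otimes> letter_val G f (inv_letter x) = \<one>"
    by (simp add: letter_val_def inv_letter_def)
  then show ?thesis
    using Cons assms
    by (auto simp: cancel_cons_def F2_lift_Cons m_assoc[symmetric] letter_val_closed F2_lift_closed)
qed (simp add: cancel_cons_def F2_lift_Cons)

lemma F2_lift_append:
  "range f \<subseteq> carrier G \<Longrightarrow> F2_lift G f (u @ v) = F2_lift G f u \<otimes> F2_lift G f v"
  by (induction u) (auto simp: F2_lift_Cons m_assoc letter_val_closed F2_lift_closed)

lemma F2_lift_free_reduce:
  assumes "range f \<subseteq> carrier G"
  shows "F2_lift G f (free_reduce w) = F2_lift G f w"
proof -
  have "F2_lift G f (foldr cancel_cons w r) = F2_lift G f w \<otimes> F2_lift G f r" for r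
    using assms
    by (induction w) (auto simp: F2_lift_cancel_cons F2_lift_Cons m_assoc letter_val_closed F2_lift_closed)
  from this[of "[]"] show ?thesis
    using assms by (simp add: free_reduce_eq_foldr F2_lift_closed)
qed

lemma F2_lift_hom: "range f \<subseteq> carrier G \<Longrightarrow> F2_lift G f \<in> hom F2 G"
  by (auto intro!: homI simp: F2_lift_closed F2_mult F2_lift_free_reduce F2_lift_append)

end

lemma F2_inv_gen: "inv\<^bsub>F2\<^esub> (F2_gen t) = [(t, True)]"
  by (simp add: F2_inv word_inv_def)

lemma hom_F2_eq_F2_lift:
  assumes "group G" "h \<in> hom F2 G" "w \<in> carrier F2"
  shows "h w = F2_lift G (\<lambda>t. h (F2_gen t)) w"
proof -
  interpret group_hom F2 G h
    using assms by (simp add: group_hom_def group_hom_axioms_def group_F2)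
  have "reduced w"
    using assms(3) by (simp add: F2_carrier)
  then show ?thesis
  proof (induction w)
    case (Cons x w)
    have "reduced w"
      using Cons.prems reduced_ConsD by blast
    have "h [x] = letter_val G (\<lambda>t. h (F2_gen t)) x"
    proof (cases x)
      case (Pair a b)
      then show ?thesis
        using F2_inv_gen[of a] hom_inv[OF F2_letter_closed[of "(a, False)"]]
        by (cases b) (auto simp: letter_val_def)
    qed
    moreover have "x # w = [x] \<otimes>\<^bsub>F2\<^esub> w"
      using Cons.prems by (simp add: F2_mult_reduced)
    then have "h (x # w) = h [x] \<otimes>\<^bsub>G\<^esub> h w"
      using \<open>reduced w\<close> by (simp add: F2_carrier)
    ultimately show ?case
      using Cons.IH[OF \<open>reduced w\<close>] by (simp add: F2_lift_Cons)
  qed (use hom_one in \<open>simp add: F2_one\<close>)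
qed

lemma hom_F2_eqI:
  assumes "group G" "h \<in> hom F2 G" "g \<in> hom F2 G" "\<And>t. h (F2_gen t) = g (F2_gen t)"
    and "w \<in> carrier F2"
  shows "h w = g w"
  using hom_F2_eq_F2_lift[OF assms(1,2,5)] hom_F2_eq_F2_lift[OF assms(1,3,5)] assms(4) by simp

lemma F2_hom_in_subgroup:
  assumes "group G" "h \<in> hom F2 G" "subgroup K G" "\<And>t. h (F2_gen t) \<in> K" "w \<in> carrier F2"
  shows "h w \<in> K"
proof -
  have "range (\<lambda>t. h (F2_gen t)) \<subseteq> K"
    using assms(4) by auto
  then show ?thesis
    using hom_F2_eq_F2_lift[OF assms(1,2,5)] group.F2_lift_in_subgroup[OF assms(1,3)] by simp
qed

lemma F2_homs_commute:
  assumes G: "group G" and h: "h \<in> hom F2 G" and g: "g \<in> hom F2 G"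
    and gens: "\<And>s t. h (F2_gen s) \<otimes>\<^bsub>G\<^esub> g (F2_gen t) = g (F2_gen t) \<otimes>\<^bsub>G\<^esub> h (F2_gen s)"
    and x: "x \<in> carrier F2" and y: "y \<in> carrier F2"
  shows "h x \<otimes>\<^bsub>G\<^esub> g y = g y \<otimes>\<^bsub>G\<^esub> h x"
proof -
  have closed: "h z \<in> carrier G" "g z \<in> carrier G" if "z \<in> carrier F2" for z
    using that h g by (auto intro: hom_in_carrier)
  have "g y \<in> centralizer G {h (F2_gen s)}" for s
    by (rule F2_hom_in_subgroup[OF G g group.subgroup_centralizer[OF G] _ y])
       (use gens closed in \<open>auto simp: centralizer_def\<close>)
  then have "h x \<in> centralizer G {g y}"
    by (intro F2_hom_in_subgroup[OF G h group.subgroup_centralizer[OF G] _ x])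
       (use closed y in \<open>auto simp: centralizer_def\<close>)
  then show ?thesis
    by (simp add: centralizer_def)
qed

lemma F2_hom_lift:
  assumes "group G" "group Q" "p \<in> hom G Q" "p ` carrier G = carrier Q" "f \<in> hom F2 Q"
  shows "\<exists>\<phi>\<in>hom F2 G. \<forall>x\<in>carrier F2. p (\<phi> x) = f x"
proof -
  have "\<forall>t. \<exists>g\<in>carrier G. p g = f (F2_gen t)"
    using assms(4,5) by (metis F2_letter_closed hom_in_carrier imageE)
  then obtain L where "\<And>t. L t \<in> carrier G \<and> p (L t) = f (F2_gen t)"
    by metis
  then have L: "range L \<subseteq> carrier G" "\<And>t. p (L t) = f (F2_gen t)"
    by auto
  have hom: "F2_lift G L \<in> hom F2 G"
    using L(1) by (rule group.F2_lift_hom[OF assms(1)])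
  have "p (F2_lift G L x) = f x" if "x \<in> carrier F2" for x
    using hom_F2_eqI[OF assms(2) hom_compose[OF hom assms(3)] assms(5) _ that]
      group.F2_lift_gen[OF assms(1) L(1)] L(2) by simp
  then show ?thesis
    using hom by blast
qed

section \<open>Injective substitutions\<close>

definition subst_word :: "(bool \<Rightarrow> (bool \<times> bool) list) \<Rightarrow> bool \<times> bool \<Rightarrow> (bool \<times> bool) list" where
  "subst_word S x = (if snd x then word_inv (S (fst x)) else S (fst x))"

lemma letter_val_F2: "(\<And>t. reduced (S t)) \<Longrightarrow> letter_val F2 S x = subst_word S x"
  by (simp add: letter_val_def subst_word_def F2_inv)

lemma F2_lift_F2_eq_concat:
  assumes S: "\<And>t. reduced (S t)" "\<And>t. S t \<noteq> []"
    and no_cancel: "\<And>x y. y \<noteq> inv_letter x \<Longrightarrow> hd (subst_word S y) \<noteq> inv_letter (last (subst_word S x))"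
    and w: "reduced w" "w \<noteq> []"
  shows "F2_lift F2 S w = concat (map (subst_word S) w) \<and> reduced (concat (map (subst_word S) w))
    \<and> concat (map (subst_word S) w) \<noteq> [] \<and> hd (concat (map (subst_word S) w)) = hd (subst_word S (hd w))"
  using w
proof (induction w)
  case (Cons x w)
  have reduced_subst: "reduced (subst_word S y)" "subst_word S y \<noteq> []" for y
    using S by (simp_all add: subst_word_def reduced_word_inv)
  show ?case
  proof (cases "w = []")
    case True
    then show ?thesis
      using S reduced_subst by (simp add: F2_lift_Cons letter_val_F2 F2_one F2_mult_reduced)
  next
    case False
    have "reduced w"
      using Cons.prems reduced_ConsD by blast
    note IH = Cons.IH[OF this False]
    have "hd w \<noteq> inv_letter x"
      using Cons.prems False by (cases w) auto
    then have "reduced (subst_word S x @ concat (map (subst_word S) w))"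
      using IH no_cancel reduced_subst by (simp add: reduced_append)
    then show ?thesis
      using IH S reduced_subst by (simp add: F2_lift_Cons letter_val_F2 F2_mult_reduced)
  qed
qed simp

lemma F2_lift_F2_inj:
  assumes S: "\<And>t. reduced (S t)" "\<And>t. S t \<noteq> []"
    and no_cancel: "\<And>x y. y \<noteq> inv_letter x \<Longrightarrow> hd (subst_word S y) \<noteq> inv_letter (last (subst_word S x))"
  shows "inj_on (F2_lift F2 S) (carrier F2)"
proof -
  interpret group_hom F2 F2 "F2_lift F2 S"
    using S(1) F2.F2_lift_hom[of S] by (auto simp: group_hom_def group_hom_axioms_def F2_carrier)
  have "F2_lift F2 S w \<noteq> []" if "reduced w" "w \<noteq> []" for w
    using F2_lift_F2_eq_concat[OF S no_cancel that] by simp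
  then have "kernel F2 F2 (F2_lift F2 S) = {\<one>\<^bsub>F2\<^esub>}"
    by (auto simp: kernel_def F2_one F2_carrier)
  then show ?thesis
    using inj_iff_trivial_ker by simp
qed

text \<open>The conditions say that no cancellation occurs between any two of \<open>u, v, u\<inverse>, v\<inverse>\<close>
  unless they are mutually inverse.\<close>

lemma F2_lift_F2_pair_inj:
  assumes "reduced u" "reduced v" "u \<noteq> []" "v \<noteq> []"
    and "hd u \<noteq> inv_letter (last u)" "hd v \<noteq> inv_letter (last v)"
    and "hd u \<noteq> hd v" "last u \<noteq> last v"
    and "hd v \<noteq> inv_letter (last u)" "hd u \<noteq> inv_letter (last v)"
  shows "inj_on (F2_lift F2 (\<lambda>t. if t then u else v)) (carrier F2)"
proof (rule F2_lift_F2_inj)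
  fix x y :: "bool \<times> bool"
  assume "y \<noteq> inv_letter x"
  then show "hd (subst_word (\<lambda>t. if t then u else v) y) \<noteq> inv_letter (last (subst_word (\<lambda>t. if t then u else v) x))"
    using assms by (cases x; cases y) (auto simp: subst_word_def hd_word_inv last_word_inv)
qed (use assms in auto)

section \<open>Cyclically reduced words\<close>

definition cyclically_reduced :: "(bool \<times> bool) list \<Rightarrow> bool" where
  "cyclically_reduced c \<longleftrightarrow> reduced c \<and> c \<noteq> [] \<and> hd c \<noteq> inv_letter (last c)"

lemma F2_conj_letter:
  assumes "reduced ([x] @ m @ [inv_letter x])"
  shows "inv\<^bsub>F2\<^esub> [x] \<otimes>\<^bsub>F2\<^esub> ([x] @ m @ [inv_letter x]) \<otimes>\<^bsub>F2\<^esub> [x] = m"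
proof -
  have m: "reduced m"
    using assms by (simp add: reduced_append reduced_Cons)
  have "free_reduce [inv_letter x, x] = []"
    by (simp add: free_reduce_Cons cancel_cons_def)
  then have "free_reduce (m @ [inv_letter x, x]) = m"
    using free_reduce_free_reduce_right[of m "[inv_letter x, x]"] m by (simp add: free_reduce_reduced)
  then have "free_reduce ([inv_letter x, x] @ m @ [inv_letter x, x]) = m"
    using cancel_cons_inv_letter[OF m, of "inv_letter x"] by (simp only: free_reduce_append) simp
  moreover have "inv\<^bsub>F2\<^esub> [x] = [inv_letter x]"
    by (simp add: F2_inv word_inv_def)
  ultimately show ?thesis
    by (simp add: F2_mult free_reduce_free_reduce_left)
qed

lemma exists_cyclically_reduced_conjugate:
  "reduced w \<Longrightarrow> w \<noteq> [] \<Longrightarrow> \<exists>g\<in>carrier F2. cyclically_reduced (inv\<^bsub>F2\<^esub> g \<otimes>\<^bsub>F2\<^esub> w \<otimes>\<^bsub>F2\<^esub> g)"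
proof (induction "length w" arbitrary: w rule: less_induct)
  case less
  have w: "w \<in> carrier F2"
    using less.prems by (simp add: F2_carrier)
  show ?case
  proof (cases "hd w = inv_letter (last w)")
    case False
    then have "cyclically_reduced w"
      using less.prems by (simp add: cyclically_reduced_def)
    then show ?thesis
      using w by (intro bexI[of _ "\<one>\<^bsub>F2\<^esub>"]) auto
  next
    case True
    obtain x w' where "w = x # w'"
      using less.prems by (cases w) auto
    moreover from this have "w' \<noteq> []"
      using True by auto
    then obtain m y where "w' = m @ [y]"
      by (metis rev_exhaust)
    ultimately have w_eq: "w = [x] @ m @ [inv_letter x]"
      using True by simp
    then have "m \<noteq> []" "reduced m"
      using less.prems by (auto simp: reduced_append reduced_Cons)
    moreover have "length m < length w"
      using w_eq by simp
    ultimately obtain g where g: "g \<in> carrier F2" "cyclically_reduced (inv\<^bsub>F2\<^esub> g \<otimes>\<^bsub>F2\<^esub> m \<otimes>\<^bsub>F2\<^esub> g)"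
      using less.hyps by blast
    have "m = inv\<^bsub>F2\<^esub> [x] \<otimes>\<^bsub>F2\<^esub> w \<otimes>\<^bsub>F2\<^esub> [x]"
      using F2_conj_letter[of x m] less.prems w_eq by simp
    then have "inv\<^bsub>F2\<^esub> ([x] \<otimes>\<^bsub>F2\<^esub> g) \<otimes>\<^bsub>F2\<^esub> w \<otimes>\<^bsub>F2\<^esub> ([x] \<otimes>\<^bsub>F2\<^esub> g)
        = inv\<^bsub>F2\<^esub> g \<otimes>\<^bsub>F2\<^esub> m \<otimes>\<^bsub>F2\<^esub> g"
      using g(1) w by (simp add: F2.inv_mult_group F2.m_assoc)
    then show ?thesis
      using g by (intro bexI[of _ "[x] \<otimes>\<^bsub>F2\<^esub> g"]) auto
  qed
qed

lemma cyclically_reduced_commutator_letter: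
  assumes "cyclically_reduced c"
  shows "\<exists>t. commutator F2 c [t] \<noteq> \<one>\<^bsub>F2\<^esub>"
proof -
  obtain t where t: "t \<noteq> inv_letter (last c)" "t \<noteq> last c" "t \<noteq> inv_letter (hd c)"
    using exists_letter_avoiding by blast
  have c: "reduced c" "c \<noteq> []"
    using assms by (auto simp: cyclically_reduced_def)
  have "reduced (c @ [t] @ word_inv c @ [inv_letter t])"
    using c t reduced_word_inv[OF c(1)]
    by (auto simp: reduced_append reduced_Cons hd_word_inv last_word_inv dest: inv_letter_eqD)
  then have "commutator F2 c [t] = c @ [t] @ word_inv c @ [inv_letter t]"
    using c F2_inv[of "[t]"]
    by (simp add: commutator_def F2_inv F2_mult free_reduce_free_reduce_left free_reduce_reduced word_inv_def)
  then show ?thesis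
    by (intro exI[of _ t]) (simp add: F2_one)
qed

lemma F2_center_trivial:
  assumes "w \<in> carrier F2" "w \<noteq> \<one>\<^bsub>F2\<^esub>"
  shows "\<exists>y\<in>carrier F2. commutator F2 w y \<noteq> \<one>\<^bsub>F2\<^esub>"
proof -
  obtain g where g: "g \<in> carrier F2" "cyclically_reduced (inv\<^bsub>F2\<^esub> g \<otimes>\<^bsub>F2\<^esub> w \<otimes>\<^bsub>F2\<^esub> g)"
    using exists_cyclically_reduced_conjugate assms by (auto simp: F2_carrier F2_one)
  then obtain t where t: "commutator F2 (inv\<^bsub>F2\<^esub> g \<otimes>\<^bsub>F2\<^esub> w \<otimes>\<^bsub>F2\<^esub> g) [t] \<noteq> \<one>\<^bsub>F2\<^esub>"
    using cyclically_reduced_commutator_letter by blast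
  define y where "y = g \<otimes>\<^bsub>F2\<^esub> [t] \<otimes>\<^bsub>F2\<^esub> inv\<^bsub>F2\<^esub> g"
  have y: "y \<in> carrier F2"
    using g(1) by (simp add: y_def)
  have "[t] = inv\<^bsub>F2\<^esub> g \<otimes>\<^bsub>F2\<^esub> y \<otimes>\<^bsub>F2\<^esub> g"
    using g(1) by (simp add: y_def F2.m_assoc)
  then have "commutator F2 (inv\<^bsub>F2\<^esub> g \<otimes>\<^bsub>F2\<^esub> w \<otimes>\<^bsub>F2\<^esub> g) [t]
      = inv\<^bsub>F2\<^esub> g \<otimes>\<^bsub>F2\<^esub> commutator F2 w y \<otimes>\<^bsub>F2\<^esub> g"
    using F2.commutator_conj[OF g(1) assms(1) y] by simp
  then have "commutator F2 w y \<noteq> \<one>\<^bsub>F2\<^esub>"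
    using t g(1) by auto
  then show ?thesis
    using y by blast
qed

text \<open>Both images lie in the normal closure of \<open>d\<close>; the two-letter words \<open>g\<close>, \<open>h\<close> are chosen so
  that no cancellation occurs between them and \<open>d\<close>.\<close>

lemma normal_closure_free_pair:
  assumes "cyclically_reduced d"
  shows "\<exists>g\<in>carrier F2. \<exists>h\<in>carrier F2.
    inj_on (F2_lift F2 (\<lambda>t. if t then g \<otimes>\<^bsub>F2\<^esub> d \<otimes>\<^bsub>F2\<^esub> inv\<^bsub>F2\<^esub> g \<otimes>\<^bsub>F2\<^esub> d
                           else d \<otimes>\<^bsub>F2\<^esub> h \<otimes>\<^bsub>F2\<^esub> d \<otimes>\<^bsub>F2\<^esub> inv\<^bsub>F2\<^esub> h)) (carrier F2)"
proof -
  have d: "reduced d" "d \<noteq> []" "hd d \<noteq> inv_letter (last d)"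
    using assms by (auto simp: cyclically_reduced_def)
  define \<alpha> \<beta> where "\<alpha> = hd d" and "\<beta> = last d"
  obtain s1 where s1: "s1 \<noteq> \<alpha>" "s1 \<noteq> inv_letter \<beta>"
    using exists_letter_avoiding by blast
  obtain s2 where s2: "s2 \<noteq> inv_letter s1" "s2 \<noteq> inv_letter \<alpha>" "s2 \<noteq> \<beta>"
    using exists_letter_avoiding by blast
  obtain h1 where h1: "h1 \<noteq> inv_letter \<beta>" "h1 \<noteq> \<alpha>" "h1 \<noteq> s1"
    using exists_letter_avoiding by blast
  obtain h2 where h2: "h2 \<noteq> inv_letter h1" "h2 \<noteq> inv_letter \<alpha>" "h2 \<noteq> \<beta>"
    using exists_letter_avoiding by blast
  define u where "u = [s1, s2] @ d @ [inv_letter s2, inv_letter s1] @ d"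
  define v where "v = d @ [h1, h2] @ d @ [inv_letter h2, inv_letter h1]"
  have u: "reduced u"
    using d s1 s2 unfolding u_def \<alpha>_def \<beta>_def by (auto simp: reduced_append reduced_Cons)
  have v: "reduced v"
    using d h1 h2 unfolding v_def \<alpha>_def \<beta>_def by (auto simp: reduced_append reduced_Cons)
  have hd_last: "hd u = s1" "last u = \<beta>" "u \<noteq> []" "hd v = \<alpha>" "last v = inv_letter h1" "v \<noteq> []"
    using d by (auto simp: u_def v_def \<alpha>_def \<beta>_def)
  have inv_words: "inv\<^bsub>F2\<^esub> [s1, s2] = [inv_letter s2, inv_letter s1]"
    "inv\<^bsub>F2\<^esub> [h1, h2] = [inv_letter h2, inv_letter h1]"
    using s2 h2 by (auto simp: F2_inv word_inv_def)
  have "[s1, s2] \<otimes>\<^bsub>F2\<^esub> d \<otimes>\<^bsub>F2\<^esub> inv\<^bsub>F2\<^esub> [s1, s2] \<otimes>\<^bsub>F2\<^esub> d = u"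
    using u unfolding inv_words by (simp add: F2_mult free_reduce_free_reduce_left free_reduce_reduced u_def)
  moreover have "d \<otimes>\<^bsub>F2\<^esub> [h1, h2] \<otimes>\<^bsub>F2\<^esub> d \<otimes>\<^bsub>F2\<^esub> inv\<^bsub>F2\<^esub> [h1, h2] = v"
    using v unfolding inv_words by (simp add: F2_mult free_reduce_free_reduce_left free_reduce_reduced v_def)
  moreover have "inj_on (F2_lift F2 (\<lambda>t. if t then u else v)) (carrier F2)"
    by (rule F2_lift_F2_pair_inj) (use u v hd_last s1 h1 d in \<open>auto simp: \<alpha>_def \<beta>_def\<close>)
  moreover have "[s1, s2] \<in> carrier F2" "[h1, h2] \<in> carrier F2"
    using s2 h2 by (auto simp: F2_carrier)
  ultimately show ?thesis
    by blast
qed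

lemma normal_subgroup_F2_cyclically_reduced:
  assumes "K \<lhd> F2" "K \<noteq> {\<one>\<^bsub>F2\<^esub>}"
  shows "\<exists>d\<in>K. cyclically_reduced d"
proof -
  interpret normal K F2
    by (rule assms(1))
  obtain w where w: "w \<in> K" "w \<noteq> \<one>\<^bsub>F2\<^esub>"
    using assms(2) one_closed by blast
  then have "reduced w" "w \<noteq> []"
    using mem_carrier by (auto simp: F2_carrier F2_one)
  then obtain g where "g \<in> carrier F2" "cyclically_reduced (inv\<^bsub>F2\<^esub> g \<otimes>\<^bsub>F2\<^esub> w \<otimes>\<^bsub>F2\<^esub> g)"
    using exists_cyclically_reduced_conjugate by blast
  then show ?thesis
    using inv_op_closed1 w(1) by blast
qed

lemma normal_subgroup_F2_contains_free:
  assumes "K \<lhd> F2" "K \<noteq> {\<one>\<^bsub>F2\<^esub>}"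
  shows "\<exists>\<sigma>\<in>mon F2 F2. \<sigma> ` carrier F2 \<subseteq> K"
proof -
  interpret K: normal K F2
    by (rule assms(1))
  obtain d where d: "d \<in> K" "cyclically_reduced d"
    using normal_subgroup_F2_cyclically_reduced[OF assms] by blast
  obtain a b where ab: "a \<in> carrier F2" "b \<in> carrier F2"
    and inj: "inj_on (F2_lift F2 (\<lambda>t. if t then a \<otimes>\<^bsub>F2\<^esub> d \<otimes>\<^bsub>F2\<^esub> inv\<^bsub>F2\<^esub> a \<otimes>\<^bsub>F2\<^esub> d
                           else d \<otimes>\<^bsub>F2\<^esub> b \<otimes>\<^bsub>F2\<^esub> d \<otimes>\<^bsub>F2\<^esub> inv\<^bsub>F2\<^esub> b)) (carrier F2)"
    using normal_closure_free_pair[OF d(2)] by blast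
  define S where "S t = (if t then a \<otimes>\<^bsub>F2\<^esub> d \<otimes>\<^bsub>F2\<^esub> inv\<^bsub>F2\<^esub> a \<otimes>\<^bsub>F2\<^esub> d
                           else d \<otimes>\<^bsub>F2\<^esub> b \<otimes>\<^bsub>F2\<^esub> d \<otimes>\<^bsub>F2\<^esub> inv\<^bsub>F2\<^esub> b)" for t
  have "d \<in> carrier F2"
    using d(1) K.mem_carrier by blast
  then have "d \<otimes>\<^bsub>F2\<^esub> b \<otimes>\<^bsub>F2\<^esub> d \<otimes>\<^bsub>F2\<^esub> inv\<^bsub>F2\<^esub> b = d \<otimes>\<^bsub>F2\<^esub> (b \<otimes>\<^bsub>F2\<^esub> d \<otimes>\<^bsub>F2\<^esub> inv\<^bsub>F2\<^esub> b)"
    using ab by (simp add: F2.m_assoc)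
  then have S: "S t \<in> K" for t
    using d(1) K.inv_op_closed2[OF ab(1) d(1)] K.inv_op_closed2[OF ab(2) d(1)] by (simp add: S_def K.m_closed)
  then have S_closed: "range S \<subseteq> carrier F2"
    using K.mem_carrier by blast
  then have hom: "F2_lift F2 S \<in> hom F2 F2"
    by (rule F2.F2_lift_hom)
  have "F2_lift F2 S x \<in> K" if "x \<in> carrier F2" for x
    using F2_hom_in_subgroup[OF group_F2 hom K.subgroup_axioms _ that]
      F2.F2_lift_gen[OF S_closed] S by simp
  then show ?thesis
    using hom inj unfolding S_def mon_def by blast
qed

section \<open>Products of groups\<close>

definition single_coord :: "'i set \<Rightarrow> ('i \<Rightarrow> ('a, 'm) monoid_scheme) \<Rightarrow> 'i \<Rightarrow> 'a \<Rightarrow> 'i \<Rightarrow> 'a" where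
  "single_coord I H j a = (\<lambda>i\<in>I. if i = j then a else \<one>\<^bsub>H i\<^esub>)"

definition coord_prod :: "('b, 'n) monoid_scheme \<Rightarrow> 'i list \<Rightarrow> ('i \<Rightarrow> 'a \<Rightarrow> 'b) \<Rightarrow> ('i \<Rightarrow> 'a) \<Rightarrow> 'b" where
  "coord_prod G js f x = foldr (\<lambda>j acc. f j (x j) \<otimes>\<^bsub>G\<^esub> acc) js \<one>\<^bsub>G\<^esub>"

lemma coord_prod_Nil [simp]: "coord_prod G [] f x = \<one>\<^bsub>G\<^esub>"
  and coord_prod_Cons [simp]: "coord_prod G (j # js) f x = f j (x j) \<otimes>\<^bsub>G\<^esub> coord_prod G js f x"
  by (simp_all add: coord_prod_def)

context
  fixes I :: "'i set" and H :: "'i \<Rightarrow> ('a, 'm) monoid_scheme"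
  assumes groups: "\<And>i. i \<in> I \<Longrightarrow> group (H i)"
begin

lemmas factor_group_simps = groups group.is_monoid monoid.one_closed monoid.l_one monoid.r_one
  monoid.inv_one group.r_inv

lemma single_coord_closed:
  "a \<in> carrier (H j) \<Longrightarrow> single_coord I H j a \<in> carrier (product_group I H)"
  by (auto simp: single_coord_def factor_group_simps)

lemma single_coord_hom: "j \<in> I \<Longrightarrow> single_coord I H j \<in> hom (H j) (product_group I H)"
  by (auto intro!: homI restrict_ext simp: single_coord_closed single_coord_def factor_group_simps)

lemma single_coord_inj: "j \<in> I \<Longrightarrow> inj_on (single_coord I H j) A"
  by (rule inj_onI) (drule fun_cong[where x = j], simp add: single_coord_def)

lemma single_coord_commute:
  assumes "j \<noteq> k" "a \<in> carrier (H j)" "b \<in> carrier (H k)"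
  shows "single_coord I H j a \<otimes>\<^bsub>product_group I H\<^esub> single_coord I H k b
    = single_coord I H k b \<otimes>\<^bsub>product_group I H\<^esub> single_coord I H j a"
  using assms by (auto intro!: restrict_ext simp: single_coord_def factor_group_simps)

lemma commutator_single_coord:
  assumes x: "x \<in> carrier (product_group I H)" and a: "a \<in> carrier (H j)" and j: "j \<in> I"
  shows "commutator (product_group I H) x (single_coord I H j a)
    = single_coord I H j (commutator (H j) (x j) a)"
proof (rule ext)
  fix i
  have inv: "inv\<^bsub>product_group I H\<^esub> x = (\<lambda>i\<in>I. inv\<^bsub>H i\<^esub> x i)"
    "inv\<^bsub>product_group I H\<^esub> single_coord I H j a = (\<lambda>i\<in>I. inv\<^bsub>H i\<^esub> single_coord I H j a i)"
    using x single_coord_closed[OF a] groups by simp_all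
  show "commutator (product_group I H) x (single_coord I H j a) i
    = single_coord I H j (commutator (H j) (x j) a) i"
  proof (cases "i \<in> I")
    case True
    interpret Hi: group "H i"
      using groups True .
    have "x i \<in> carrier (H i)"
      using x True by auto
    then show ?thesis
      unfolding commutator_def inv using True a by (cases "i = j") (simp_all add: single_coord_def)
  qed (simp add: commutator_def single_coord_def)
qed

lemma coord_prod_single_coord_eq:
  assumes "x \<in> carrier (product_group I H)" "set js \<subseteq> I" "distinct js"
  shows "coord_prod (product_group I H) js (single_coord I H) x
    = (\<lambda>i\<in>I. if i \<in> set js then x i else \<one>\<^bsub>H i\<^esub>)"
  using assms(2,3)
proof (induction js)
  case (Cons j js)
  then show ?case
    using assms(1) by (auto intro!: restrict_ext simp: single_coord_def factor_group_simps PiE_iff)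
qed simp

end

lemma coord_prod_cong:
  "(\<And>j. j \<in> set js \<Longrightarrow> f j (x j) = g j (y j)) \<Longrightarrow> coord_prod G js f x = coord_prod G js g y"
  by (induction js) auto

lemma (in group) coord_prod_in_subgroup:
  "subgroup K G \<Longrightarrow> (\<And>j. j \<in> set js \<Longrightarrow> f j (x j) \<in> K) \<Longrightarrow> coord_prod G js f x \<in> K"
  by (induction js) (auto simp: subgroup.one_closed subgroup.m_closed)

lemma (in group) coord_prod_closed:
  "(\<And>j. j \<in> set js \<Longrightarrow> f j (x j) \<in> carrier G) \<Longrightarrow> coord_prod G js f x \<in> carrier G"
  by (rule coord_prod_in_subgroup[OF subgroup_self])

lemma (in group_hom) hom_coord_prod:
  "(\<And>j. j \<in> set js \<Longrightarrow> f j (x j) \<in> carrier G)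
    \<Longrightarrow> h (coord_prod G js f x) = coord_prod H js (\<lambda>j a. h (f j a)) x"
  by (induction js) (auto simp: G.coord_prod_closed)

lemma (in group) coord_prod_mult:
  assumes "distinct js"
    and hom: "\<And>j. j \<in> set js \<Longrightarrow> f j \<in> hom (H j) G"
    and commute: "\<And>j k a b. j \<in> set js \<Longrightarrow> k \<in> set js \<Longrightarrow> j \<noteq> k \<Longrightarrow> a \<in> carrier (H j)
       \<Longrightarrow> b \<in> carrier (H k) \<Longrightarrow> f j a \<otimes> f k b = f k b \<otimes> f j a"
    and xy: "\<And>j. j \<in> set js \<Longrightarrow> x j \<in> carrier (H j) \<and> y j \<in> carrier (H j)"
  shows "coord_prod G js f (\<lambda>j. x j \<otimes>\<^bsub>H j\<^esub> y j) = coord_prod G js f x \<otimes> coord_prod G js f y"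
  using assms
proof (induction js)
  case (Cons j js)
  define fx fy px py where "fx = f j (x j)" and "fy = f j (y j)"
    and "px = coord_prod G js f x" and "py = coord_prod G js f y"
  have closed: "f k a \<in> carrier G" if "k \<in> set (j # js)" "a \<in> carrier (H k)" for k a
    using Cons.prems(2) that by (blast intro: hom_in_carrier)
  then have carrier: "fx \<in> carrier G" "fy \<in> carrier G" "px \<in> carrier G" "py \<in> carrier G"
    using Cons.prems(4) by (auto simp: fx_def fy_def px_def py_def intro!: coord_prod_closed)
  have "f k (x k) \<in> centralizer G {fy}" if "k \<in> set js" for k
  proof -
    have "k \<noteq> j"
      using that Cons.prems(1) by auto
    then show ?thesis
      using that Cons.prems(3)[of k j "x k" "y j"] Cons.prems(4) closed[of k "x k"]
      by (auto simp: centralizer_def fy_def)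
  qed
  then have "px \<in> centralizer G {fy}"
    using carrier unfolding px_def by (intro coord_prod_in_subgroup subgroup_centralizer) auto
  then have swap: "fy \<otimes> px = px \<otimes> fy"
    by (simp add: centralizer_def)
  have "f j (x j \<otimes>\<^bsub>H j\<^esub> y j) = fx \<otimes> fy"
    using Cons.prems(2,4) by (simp add: hom_mult fx_def fy_def)
  then have "coord_prod G (j # js) f (\<lambda>j. x j \<otimes>\<^bsub>H j\<^esub> y j) = (fx \<otimes> fy) \<otimes> (px \<otimes> py)"
    using Cons by (simp add: px_def py_def)
  also have "\<dots> = fx \<otimes> (fy \<otimes> px) \<otimes> py"
    using carrier by (simp add: m_assoc)
  also have "\<dots> = (fx \<otimes> px) \<otimes> (fy \<otimes> py)"
    using carrier by (simp add: swap m_assoc)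
  finally show ?case
    by (simp add: fx_def fy_def px_def py_def)
qed simp

lemma (in group) coord_prod_hom:
  assumes "distinct js"
    and hom: "\<And>j. j \<in> set js \<Longrightarrow> f j \<in> hom (H j) G"
    and commute: "\<And>j k a b. j \<in> set js \<Longrightarrow> k \<in> set js \<Longrightarrow> j \<noteq> k \<Longrightarrow> a \<in> carrier (H j)
       \<Longrightarrow> b \<in> carrier (H k) \<Longrightarrow> f j a \<otimes> f k b = f k b \<otimes> f j a"
  shows "coord_prod G js f \<in> hom (product_group (set js) H) G"
proof (rule homI)
  fix x assume x: "x \<in> carrier (product_group (set js) H)"
  have "f j (x j) \<in> carrier G" if "j \<in> set js" for j
    using hom_in_carrier[OF hom[OF that]] x that by auto
  then show "coord_prod G js f x \<in> carrier G"
    by (rule coord_prod_closed)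
next
  fix x y assume xy: "x \<in> carrier (product_group (set js) H)" "y \<in> carrier (product_group (set js) H)"
  have "coord_prod G js f (x \<otimes>\<^bsub>product_group (set js) H\<^esub> y) = coord_prod G js f (\<lambda>j. x j \<otimes>\<^bsub>H j\<^esub> y j)"
    by (rule coord_prod_cong) simp
  also have "\<dots> = coord_prod G js f x \<otimes> coord_prod G js f y"
    by (rule coord_prod_mult[OF assms(1) hom commute]) (use xy in auto)
  finally show "coord_prod G js f (x \<otimes>\<^bsub>product_group (set js) H\<^esub> y) = coord_prod G js f x \<otimes> coord_prod G js f y" .
qed

lemma coord_prod_single_coord:
  assumes "distinct js" "\<And>j. j \<in> set js \<Longrightarrow> group (H j)" "x \<in> carrier (product_group (set js) H)"
  shows "coord_prod (product_group (set js) H) js (single_coord (set js) H) x = x"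
  using coord_prod_single_coord_eq[OF assms(2,3) order_refl assms(1)] assms(3)
  by (auto simp: PiE_iff extensional_def)

lemma product_map_mon:
  assumes "\<sigma> \<in> mon H K" "group H" "group K"
  shows "(\<lambda>x. \<lambda>i\<in>I. \<sigma> (x i)) \<in> mon (product_group I (\<lambda>_. H)) (product_group I (\<lambda>_. K))"
proof -
  have \<sigma>: "\<sigma> \<in> hom H K" "inj_on \<sigma> (carrier H)"
    using assms(1) by (simp_all add: mon_def)
  have "(\<lambda>x. \<lambda>i\<in>I. \<sigma> (x i)) \<in> hom (product_group I (\<lambda>_. H)) (product_group I (\<lambda>_. K))"
    using \<sigma>(1) by (intro homI) (auto simp: PiE_iff hom_in_carrier hom_mult intro!: restrict_ext)
  moreover have "inj_on (\<lambda>x. \<lambda>i\<in>I. \<sigma> (x i)) (carrier (product_group I (\<lambda>_. H)))"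
  proof (rule inj_onI)
    fix x y
    assume xy: "x \<in> carrier (product_group I (\<lambda>_. H))" "y \<in> carrier (product_group I (\<lambda>_. H))"
      and eq: "(\<lambda>i\<in>I. \<sigma> (x i)) = (\<lambda>i\<in>I. \<sigma> (y i))"
    have "x i = y i" if "i \<in> I" for i
      using fun_cong[OF eq, of i] xy that inj_onD[OF \<sigma>(2)] by auto
    then show "x = y"
      using xy by (auto intro: PiE_ext)
  qed
  ultimately show ?thesis
    by (simp add: mon_def)
qed

lemma product_map_single_coord:
  "\<sigma> \<one>\<^bsub>H\<^esub> = \<one>\<^bsub>K\<^esub> \<Longrightarrow>
    (\<lambda>i\<in>I. \<sigma> (single_coord I (\<lambda>_. H) j a i)) = single_coord I (\<lambda>_. K) j (\<sigma> a)"
  by (auto simp: single_coord_def)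

section \<open>Free subgroups of \<open>F2\<^sup>n\<close>\<close>

abbreviation F2_power :: "nat \<Rightarrow> (nat \<Rightarrow> (bool \<times> bool) list) monoid" where
  "F2_power n \<equiv> product_group {..<n} (\<lambda>_. F2)"

lemma group_F2_power: "group (F2_power n)"
  by (simp add: group_F2)

lemma F2_power_non_inj_factor:
  assumes H: "group H" and \<phi>: "\<phi> \<in> hom (F2_power n) H" and not_inj: "\<not> inj_on \<phi> (carrier (F2_power n))"
  shows "\<exists>j<n. \<not> inj_on (\<phi> \<circ> single_coord {..<n} (\<lambda>_. F2) j) (carrier F2)"
proof -
  interpret group_hom "F2_power n" H \<phi>
    using H \<phi> by (simp add: group_hom_def group_hom_axioms_def group_F2_power)
  have "kernel (F2_power n) H \<phi> \<noteq> {\<one>\<^bsub>F2_power n\<^esub>}"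
    using not_inj inj_iff_trivial_ker by simp
  then obtain k where "k \<in> kernel (F2_power n) H \<phi>" "k \<noteq> \<one>\<^bsub>F2_power n\<^esub>"
    using subgroup.one_closed[OF subgroup_kernel] by blast
  then have k: "k \<in> carrier (F2_power n)" "\<phi> k = \<one>\<^bsub>H\<^esub>" "k \<noteq> \<one>\<^bsub>F2_power n\<^esub>"
    by (simp_all add: kernel_def)
  obtain j where j: "j < n" "k j \<noteq> \<one>\<^bsub>F2\<^esub>"
  proof (rule ccontr)
    assume "\<not> thesis"
    then have "k i = \<one>\<^bsub>F2_power n\<^esub> i" for i
      using that k(1) by (cases "i < n") (auto simp: PiE_iff extensional_def)
    then show False
      using k(3) by auto
  qed
  obtain y where y: "y \<in> carrier F2" "commutator F2 (k j) y \<noteq> \<one>\<^bsub>F2\<^esub>"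
    using F2_center_trivial k(1) j by auto
  define e where "e = single_coord {..<n} (\<lambda>_. F2) j"
  have e: "e \<in> hom F2 (F2_power n)"
    using single_coord_hom[of "{..<n}" "\<lambda>_. F2" j] j group_F2 by (simp add: e_def)
  have e_one: "e \<one>\<^bsub>F2\<^esub> = \<one>\<^bsub>F2_power n\<^esub>"
    by (simp add: e_def single_coord_def)
  have "e (commutator F2 (k j) y) = commutator (F2_power n) k (e y)"
    using commutator_single_coord[of "{..<n}" "\<lambda>_. F2" k y j] k(1) y j group_F2 by (simp add: e_def)
  then have "(\<phi> \<circ> e) (commutator F2 (k j) y) = commutator H (\<phi> k) (\<phi> (e y))"
    using hom_commutator[OF k(1) hom_in_carrier[OF e y(1)]] by simp
  also have "\<dots> = \<one>\<^bsub>H\<^esub>"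
    using k(2) hom_closed[OF hom_in_carrier[OF e y(1)]] by (simp add: commutator_def)
  also have "\<dots> = (\<phi> \<circ> e) \<one>\<^bsub>F2\<^esub>"
    using e_one hom_one by simp
  finally have "\<not> inj_on (\<phi> \<circ> e) (carrier F2)"
    using inj_onD y k(1) j(1) by fastforce
  then show ?thesis
    using j(1) by (auto simp: e_def)
qed

lemma F2_power_kernel_contains_free:
  assumes H: "group H" and \<phi>: "\<phi> \<in> hom (F2_power n) H" and not_inj: "\<not> inj_on \<phi> (carrier (F2_power n))"
  shows "\<exists>f\<in>mon F2 (F2_power n). f ` carrier F2 \<subseteq> kernel (F2_power n) H \<phi>"
proof -
  obtain j where j: "j < n" "\<not> inj_on (\<phi> \<circ> single_coord {..<n} (\<lambda>_. F2) j) (carrier F2)"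
    using F2_power_non_inj_factor[OF assms] by blast
  define e where "e = single_coord {..<n} (\<lambda>_. F2) j"
  have e: "e \<in> mon F2 (F2_power n)"
    using single_coord_hom[of "{..<n}" "\<lambda>_. F2" j] single_coord_inj[of "{..<n}" "\<lambda>_. F2" j] j group_F2
    by (simp add: e_def mon_def)
  have e_hom: "e \<in> hom F2 (F2_power n)" and e_not_inj: "\<not> inj_on (\<phi> \<circ> e) (carrier F2)"
    using e j(2) by (simp_all add: e_def mon_def)
  have "group_hom F2 H (\<phi> \<circ> e)"
    using H \<phi> e_hom by (simp add: group_hom_def group_hom_axioms_def group_F2 hom_compose)
  then obtain \<sigma> where \<sigma>: "\<sigma> \<in> mon F2 F2" "\<sigma> ` carrier F2 \<subseteq> kernel F2 H (\<phi> \<circ> e)"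
    using normal_subgroup_F2_contains_free group_hom.normal_kernel group_hom.inj_iff_trivial_ker
      e_not_inj by metis
  have "e \<circ> \<sigma> \<in> mon F2 (F2_power n)"
    using \<sigma>(1) e by (rule mon_compose)
  moreover have "(e \<circ> \<sigma>) x \<in> kernel (F2_power n) H \<phi>" if "x \<in> carrier F2" for x
  proof -
    have "\<sigma> x \<in> carrier F2" "\<phi> (e (\<sigma> x)) = \<one>\<^bsub>H\<^esub>"
      using \<sigma>(2) that by (auto simp: kernel_def)
    then show ?thesis
      unfolding kernel_def using hom_in_carrier[OF e_hom] by simp
  qed
  ultimately show ?thesis
    by blast
qed

lemma mon_into_image_of_mon:
  assumes "group N" "group K" "i \<in> mon N G" "f \<in> mon K G" "f ` carrier K \<subseteq> i ` carrier N"
  shows "(\<lambda>x. inv_into (carrier N) i (f x)) \<in> mon K N"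
proof -
  define g where "g = (\<lambda>x. inv_into (carrier N) i (f x))"
  have g: "g x \<in> carrier N" "i (g x) = f x" if "x \<in> carrier K" for x
    using assms(5) that by (auto simp: g_def inv_into_into f_inv_into_f)
  have "g \<in> hom K N"
  proof (rule homI)
    fix x y assume xy: "x \<in> carrier K" "y \<in> carrier K"
    have closed: "x \<otimes>\<^bsub>K\<^esub> y \<in> carrier K" "g x \<otimes>\<^bsub>N\<^esub> g y \<in> carrier N"
      using xy g(1) assms(1,2) by (simp_all add: group.is_monoid monoid.m_closed)
    have "i (g (x \<otimes>\<^bsub>K\<^esub> y)) = f x \<otimes>\<^bsub>G\<^esub> f y"
      using assms(4) g(2)[OF closed(1)] xy by (simp add: mon_def hom_mult)
    also have "\<dots> = i (g x \<otimes>\<^bsub>N\<^esub> g y)"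
      using hom_mult[of i N G "g x" "g y"] assms(3) g xy by (simp add: mon_def)
    finally show "g (x \<otimes>\<^bsub>K\<^esub> y) = g x \<otimes>\<^bsub>N\<^esub> g y"
      using assms(3) g(1)[OF closed(1)] closed(2) by (auto simp: mon_def dest: inj_onD)
  qed (use g in blast)
  moreover have "inj_on (i \<circ> g) (carrier K)"
    using inj_on_cong[of "carrier K" "i \<circ> g" f] g(2) assms(4) by (simp add: mon_def)
  then have "inj_on g (carrier K)"
    by (rule inj_on_imageI2)
  ultimately show ?thesis
    by (simp add: g_def mon_def)
qed

lemma short_exact_inj_on_comp:
  assumes se: "short_exact N G Q i p" and no_F2: "mon F2 N = {}" and h: "h \<in> mon (F2_power n) G"
  shows "inj_on (p \<circ> h) (carrier (F2_power n))"
proof (rule ccontr)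
  from se have groups: "group N" "group Q" and i: "i \<in> mon N G"
    and p: "p \<in> hom G Q" and ker: "i ` carrier N = kernel G Q p"
    by (auto simp: short_exact_def mon_def)
  have h_hom: "h \<in> hom (F2_power n) G"
    using h by (simp add: mon_def)
  assume "\<not> inj_on (p \<circ> h) (carrier (F2_power n))"
  then obtain f where f: "f \<in> mon F2 (F2_power n)" "f ` carrier F2 \<subseteq> kernel (F2_power n) Q (p \<circ> h)"
    using F2_power_kernel_contains_free[OF groups(2) hom_compose[OF h_hom p]] by blast
  have "h \<circ> f \<in> mon F2 G"
    using f(1) h by (rule mon_compose)
  moreover have "h y \<in> kernel G Q p" if "y \<in> kernel (F2_power n) Q (p \<circ> h)" for y
    using that hom_in_carrier[OF h_hom] by (simp add: kernel_def)
  then have "(h \<circ> f) ` carrier F2 \<subseteq> i ` carrier N"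
    using f(2) unfolding ker by auto
  ultimately show False
    using mon_into_image_of_mon[OF groups(1) group_F2 i] no_F2 by blast
qed

section \<open>The free subgroup rank\<close>

lemma F2_power_embeds_oneI:
  assumes "f \<in> mon F2 G"
  shows "F2_power_embeds 1 G"
  unfolding F2_power_embeds_def
proof (intro exI conjI)
  have f: "f \<in> hom F2 G" "inj_on f (carrier F2)"
    using assms by (simp_all add: mon_def)
  have [simp]: "x \<in> carrier (F2_power 1) \<Longrightarrow> x 0 \<in> carrier F2" for x
    by auto
  show "(\<lambda>x. f (x 0)) \<in> hom (F2_power 1) G"
    using f(1) by (intro homI) (simp_all add: hom_in_carrier hom_mult del: carrier_product_group)
  show "inj_on (\<lambda>x. f (x 0)) (carrier (F2_power 1))"
  proof (rule inj_onI)
    fix x y assume xy: "x \<in> carrier (F2_power 1)" "y \<in> carrier (F2_power 1)" "f (x 0) = f (y 0)"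
    then have "x 0 = y 0"
      using f(2) by (auto dest: inj_onD simp del: carrier_product_group)
    then show "x = y"
      using xy(1,2) by (intro PiE_ext[of x "{..<1}" _ y]) auto
  qed
qed

lemma free_subgroup_rank_geI: "F2_power_embeds n G \<Longrightarrow> enat n \<le> free_subgroup_rank G"
  unfolding free_subgroup_rank_def by (rule Sup_upper) simp

lemma free_subgroup_rank_mono:
  "(\<And>n. F2_power_embeds n G \<Longrightarrow> F2_power_embeds n H) \<Longrightarrow> free_subgroup_rank G \<le> free_subgroup_rank H"
  unfolding free_subgroup_rank_def by (rule Sup_subset_mono) auto

lemma F2_power_embeds_iff: "F2_power_embeds n G \<longleftrightarrow> (\<exists>h. h \<in> mon (F2_power n) G)"
  by (simp add: F2_power_embeds_def mon_def)

lemma F2_power_embeds_mon: "F2_power_embeds n G \<Longrightarrow> f \<in> mon G H \<Longrightarrow> F2_power_embeds n H"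
  by (auto simp: F2_power_embeds_iff intro: mon_compose)

lemma short_exact_F2_power_embeds_quotient:
  assumes "short_exact N G Q i p" "free_subgroup_rank N = 0" "F2_power_embeds n G"
  shows "F2_power_embeds n Q"
proof -
  have "\<not> F2_power_embeds 1 N"
  proof
    assume "F2_power_embeds 1 N"
    then have "enat 1 \<le> free_subgroup_rank N"
      by (rule free_subgroup_rank_geI)
    then show False
      using assms(2) by (simp add: zero_enat_def)
  qed
  then have "mon F2 N = {}"
    using F2_power_embeds_oneI by blast
  obtain h where "h \<in> mon (F2_power n) G"
    using assms(3) by (auto simp: F2_power_embeds_iff)
  moreover from this have "p \<circ> h \<in> hom (F2_power n) Q"
    using assms(1) hom_compose by (auto simp: mon_def short_exact_def)
  ultimately have "p \<circ> h \<in> mon (F2_power n) Q"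
    using short_exact_inj_on_comp[OF assms(1) \<open>mon F2 N = {}\<close>] by (simp add: mon_def)
  then show ?thesis
    by (auto simp: F2_power_embeds_iff)
qed

lemma split_ext_F2_power_embeds:
  assumes "split_ext G Q p" "F2_power_embeds n Q"
  shows "F2_power_embeds n G"
proof -
  obtain s where s: "s \<in> hom Q G" "\<And>q. q \<in> carrier Q \<Longrightarrow> p (s q) = q"
    using assms(1) by (auto simp: split_ext_def)
  have "inj_on s (carrier Q)"
    by (rule inj_onI) (metis s(2))
  then have "s \<in> mon Q G"
    using s(1) by (simp add: mon_def)
  then show ?thesis
    by (rule F2_power_embeds_mon[OF assms(2)])
qed

section \<open>Central extensions\<close>

definition commutator_subst :: "(bool \<times> bool) list \<Rightarrow> (bool \<times> bool) list" where
  "commutator_subst = F2_lift F2 (\<lambda>t. commutator F2 [(True, \<not> t)] [(False, \<not> t)])"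

lemma commutator_subst_mon: "commutator_subst \<in> mon F2 F2"
proof -
  have words: "commutator F2 [(True, \<not> t)] [(False, \<not> t)] = [(True, \<not> t), (False, \<not> t), (True, t), (False, t)]" for t
    by (cases t) (simp_all add: commutator_def F2_inv word_inv_def F2_mult free_reduce_Cons cancel_cons_def)
  have "(\<lambda>t. commutator F2 [(True, \<not> t)] [(False, \<not> t)])
      = (\<lambda>t. if t then [(True, False), (False, False), (True, True), (False, True)]
             else [(True, True), (False, True), (True, False), (False, False)])"
    by (auto simp: words)
  then have "inj_on commutator_subst (carrier F2)"
    unfolding commutator_subst_def by (simp only:) (rule F2_lift_F2_pair_inj; simp)
  moreover have "commutator_subst \<in> hom F2 F2"
    unfolding commutator_subst_def by (rule F2.F2_lift_hom) auto
  ultimately show ?thesis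
    by (simp add: mon_def)
qed

lemma commutator_subst_gen:
  assumes "group G" "\<phi> \<in> hom F2 G"
  shows "\<phi> (commutator_subst (F2_gen t)) = commutator G (\<phi> [(True, \<not> t)]) (\<phi> [(False, \<not> t)])"
proof -
  interpret group_hom F2 G \<phi>
    using assms by (simp add: group_hom_def group_hom_axioms_def group_F2)
  show ?thesis
    unfolding commutator_subst_def by (subst F2.F2_lift_gen) (auto simp: hom_commutator)
qed

lemma commutator_subst_commute:
  assumes G: "group G" and \<phi>: "\<phi> \<in> hom F2 G" and \<psi>: "\<psi> \<in> hom F2 G"
    and center: "\<And>u v. u \<in> carrier F2 \<Longrightarrow> v \<in> carrier F2 \<Longrightarrow> commutator G (\<phi> u) (\<psi> v) \<in> center G"
    and x: "x \<in> carrier F2" and y: "y \<in> carrier F2"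
  shows "\<phi> (commutator_subst x) \<otimes>\<^bsub>G\<^esub> \<psi> (commutator_subst y) = \<psi> (commutator_subst y) \<otimes>\<^bsub>G\<^esub> \<phi> (commutator_subst x)"
proof -
  have cs: "commutator_subst \<in> hom F2 F2"
    using commutator_subst_mon by (simp add: mon_def)
  have letters: "\<phi> [a] \<in> carrier G" "\<psi> [a] \<in> carrier G" for a
    using \<phi> \<psi> by (auto intro: hom_in_carrier)
  have "(\<phi> \<circ> commutator_subst) x \<otimes>\<^bsub>G\<^esub> (\<psi> \<circ> commutator_subst) y
      = (\<psi> \<circ> commutator_subst) y \<otimes>\<^bsub>G\<^esub> (\<phi> \<circ> commutator_subst) x"
  proof (rule F2_homs_commute[OF G hom_compose[OF cs \<phi>] hom_compose[OF cs \<psi>] _ x y])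
    fix s t
    show "(\<phi> \<circ> commutator_subst) (F2_gen s) \<otimes>\<^bsub>G\<^esub> (\<psi> \<circ> commutator_subst) (F2_gen t)
      = (\<psi> \<circ> commutator_subst) (F2_gen t) \<otimes>\<^bsub>G\<^esub> (\<phi> \<circ> commutator_subst) (F2_gen s)"
      unfolding comp_apply commutator_subst_gen[OF G \<phi>] commutator_subst_gen[OF G \<psi>]
      by (rule group.commutators_commute_of_center[OF G letters(1) letters(1) letters(2) letters(2)])
         (auto intro: center)
  qed
  then show ?thesis
    by simp
qed

lemma central_ext_commutator_center:
  assumes "short_exact N G Q i p" "central_ext N G i" "x \<in> carrier G" "y \<in> carrier G"
    and "p x \<otimes>\<^bsub>Q\<^esub> p y = p y \<otimes>\<^bsub>Q\<^esub> p x"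
  shows "commutator G x y \<in> center G"
proof -
  from assms(1) have "group G" "group Q" "p \<in> hom G Q" and ker: "i ` carrier N = kernel G Q p"
    by (auto simp: short_exact_def)
  then interpret group_hom G Q p
    by (simp add: group_hom_def group_hom_axioms_def)
  have "p (commutator G x y) = \<one>\<^bsub>Q\<^esub>"
    using assms(3-5) by (simp add: hom_commutator H.commutator_eq_one_iff)
  then have "commutator G x y \<in> i ` carrier N"
    using assms(3,4) unfolding ker by (simp add: kernel_def)
  then show ?thesis
    using assms(2,3,4) by (auto simp: central_ext_def centralizer_def)
qed

lemma F2_power_embeds_of_commuting_lifts:
  assumes G: "group G" and Q: "group Q" and p: "p \<in> hom G Q" and h: "h \<in> mon (F2_power n) Q"
    and \<psi>: "\<And>j. j < n \<Longrightarrow> \<psi> j \<in> hom F2 G"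
    and commute: "\<And>j k x y. j < n \<Longrightarrow> k < n \<Longrightarrow> j \<noteq> k \<Longrightarrow> x \<in> carrier F2 \<Longrightarrow> y \<in> carrier F2
      \<Longrightarrow> \<psi> j x \<otimes>\<^bsub>G\<^esub> \<psi> k y = \<psi> k y \<otimes>\<^bsub>G\<^esub> \<psi> j x"
    and lift: "\<And>j x. j < n \<Longrightarrow> x \<in> carrier F2 \<Longrightarrow> p (\<psi> j x) = h (single_coord {..<n} (\<lambda>_. F2) j x)"
  shows "F2_power_embeds n G"
proof -
  interpret P: group "F2_power n"
    by (rule group_F2_power)
  interpret p: group_hom G Q p
    using G Q p by (simp add: group_hom_def group_hom_axioms_def)
  interpret h: group_hom "F2_power n" Q h
    using h Q by (simp add: group_hom_def group_hom_axioms_def mon_def)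
  define \<Phi> where "\<Phi> = coord_prod G [0..<n] \<psi>"
  have "\<Phi> \<in> hom (F2_power n) G"
    unfolding \<Phi>_def using group.coord_prod_hom[OF G, of "[0..<n]" \<psi> "\<lambda>_. F2"] \<psi> commute
    by (simp add: atLeast0LessThan)
  moreover have "p (\<Phi> x) = h x" if x: "x \<in> carrier (F2_power n)" for x
  proof -
    have x_j: "x j \<in> carrier F2" if "j < n" for j
      using x that by auto
    have "p (\<Phi> x) = coord_prod Q [0..<n] (\<lambda>j a. p (\<psi> j a)) x"
      unfolding \<Phi>_def using x_j \<psi> by (intro p.hom_coord_prod) (auto intro: hom_in_carrier)
    also have "\<dots> = coord_prod Q [0..<n] (\<lambda>j a. h (single_coord {..<n} (\<lambda>_. F2) j a)) x"
      using x_j lift by (intro coord_prod_cong) auto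
    also have "\<dots> = h (coord_prod (F2_power n) [0..<n] (single_coord {..<n} (\<lambda>_. F2)) x)"
      using x_j single_coord_closed[of "{..<n}" "\<lambda>_. F2"] group_F2
      by (intro h.hom_coord_prod[symmetric]) auto
    also have "\<dots> = h x"
      using coord_prod_single_coord[of "[0..<n]" "\<lambda>_. F2" x] x group_F2 by (simp add: atLeast0LessThan)
    finally show ?thesis .
  qed
  then have "inj_on (p \<circ> \<Phi>) (carrier (F2_power n))"
    using h inj_on_cong[of "carrier (F2_power n)" "p \<circ> \<Phi>" h] by (simp add: mon_def)
  then have "inj_on \<Phi> (carrier (F2_power n))"
    by (rule inj_on_imageI2)
  ultimately show ?thesis
    unfolding F2_power_embeds_def by blast
qed

lemma F2_power_factor_lifts:
  assumes "group G" "group Q" "p \<in> hom G Q" "p ` carrier G = carrier Q" "h \<in> hom (F2_power n) Q"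
  shows "\<exists>\<phi>. \<forall>j<n. \<phi> j \<in> hom F2 G \<and> (\<forall>x\<in>carrier F2. p (\<phi> j x) = h (single_coord {..<n} (\<lambda>_. F2) j x))"
proof -
  have "\<exists>\<phi>\<in>hom F2 G. \<forall>x\<in>carrier F2. p (\<phi> x) = (h \<circ> single_coord {..<n} (\<lambda>_. F2) j) x" if "j < n" for j
    using single_coord_hom[of "{..<n}" "\<lambda>_. F2" j] that group_F2
    by (intro F2_hom_lift[OF assms(1-4)] hom_compose[OF _ assms(5)]) auto
  then show ?thesis
    by (metis comp_apply)
qed

lemma central_ext_F2_power_embeds:
  assumes se: "short_exact N G Q i p" and central: "central_ext N G i" and Q_embeds: "F2_power_embeds n Q"
  shows "F2_power_embeds n G"
proof -
  from se have G: "group G" and Q: "group Q" and p: "p \<in> hom G Q" "p ` carrier G = carrier Q"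
    by (auto simp: short_exact_def)
  obtain h where h: "h \<in> mon (F2_power n) Q"
    using Q_embeds by (auto simp: F2_power_embeds_iff)
  then interpret h: group_hom "F2_power n" Q h
    using Q by (simp add: group_hom_def group_hom_axioms_def group_F2_power mon_def)
  define e where "e j = single_coord {..<n} (\<lambda>_. F2) j" for j
  obtain \<phi> where \<phi>: "\<And>j. j < n \<Longrightarrow> \<phi> j \<in> hom F2 G"
    and p_\<phi>: "\<And>j x. j < n \<Longrightarrow> x \<in> carrier F2 \<Longrightarrow> p (\<phi> j x) = h (e j x)"
    using F2_power_factor_lifts[OF G Q p h.homh] unfolding e_def by metis
  have center: "commutator G (\<phi> j u) (\<phi> k v) \<in> center G"
    if "j < n" "k < n" "j \<noteq> k" "u \<in> carrier F2" "v \<in> carrier F2" for j k u v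
  proof (rule central_ext_commutator_center[OF se central])
    show "\<phi> j u \<in> carrier G" "\<phi> k v \<in> carrier G"
      using that \<phi> by (auto intro: hom_in_carrier)
    have "e j u \<otimes>\<^bsub>F2_power n\<^esub> e k v = e k v \<otimes>\<^bsub>F2_power n\<^esub> e j u"
      using single_coord_commute[of "{..<n}" "\<lambda>_. F2" j k u v] that group_F2 by (simp add: e_def)
    moreover have "e j u \<in> carrier (F2_power n)" "e k v \<in> carrier (F2_power n)"
      using single_coord_closed[of "{..<n}" "\<lambda>_. F2"] that group_F2 by (simp_all add: e_def)
    ultimately show "p (\<phi> j u) \<otimes>\<^bsub>Q\<^esub> p (\<phi> k v) = p (\<phi> k v) \<otimes>\<^bsub>Q\<^esub> p (\<phi> j u)"
      using that p_\<phi> by (simp add: h.hom_mult[symmetric] del: carrier_product_group)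
  qed
  define cs_n where "cs_n = (\<lambda>x. \<lambda>i\<in>{..<n}. commutator_subst (x i))"
  have cs_n: "cs_n \<in> mon (F2_power n) (F2_power n)"
    unfolding cs_n_def by (rule product_map_mon[OF commutator_subst_mon group_F2 group_F2])
  have cs: "commutator_subst \<in> hom F2 F2"
    using commutator_subst_mon by (simp add: mon_def)
  then have "commutator_subst \<one>\<^bsub>F2\<^esub> = \<one>\<^bsub>F2\<^esub>"
    by (simp add: group_hom.hom_one group_hom_def group_hom_axioms_def group_F2)
  then have cs_n_e: "cs_n (e j x) = e j (commutator_subst x)" for j x
    unfolding cs_n_def e_def by (rule product_map_single_coord)
  show ?thesis
  proof (rule F2_power_embeds_of_commuting_lifts[OF G Q p(1) mon_compose[OF cs_n h]])
    show "\<phi> j \<circ> commutator_subst \<in> hom F2 G" if "j < n" for j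
      using cs \<phi>[OF that] by (rule hom_compose)
    show "(\<phi> j \<circ> commutator_subst) x \<otimes>\<^bsub>G\<^esub> (\<phi> k \<circ> commutator_subst) y
      = (\<phi> k \<circ> commutator_subst) y \<otimes>\<^bsub>G\<^esub> (\<phi> j \<circ> commutator_subst) x"
      if "j < n" "k < n" "j \<noteq> k" "x \<in> carrier F2" "y \<in> carrier F2" for j k x y
      using commutator_subst_commute[OF G \<phi>[OF that(1)] \<phi>[OF that(2)] center[OF that(1-3)] that(4,5)]
      by simp
    show "p ((\<phi> j \<circ> commutator_subst) x) = (h \<circ> cs_n) (single_coord {..<n} (\<lambda>_. F2) j x)"
      if "j < n" "x \<in> carrier F2" for j x
      using p_\<phi>[OF that(1) hom_in_carrier[OF cs that(2)]] cs_n_e by (simp add: e_def)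
  qed
qed

theorem proposition2p4:
  fixes N :: "('n, 'a) monoid_scheme" and G :: "('g, 'b) monoid_scheme"
    and Q :: "('q, 'c) monoid_scheme"
    and i :: "'n \<Rightarrow> 'g" and p :: "'g \<Rightarrow> 'q"
  assumes "short_exact N G Q i p"
    and "free_subgroup_rank N = 0"
  shows "free_subgroup_rank G \<le> free_subgroup_rank Q \<and>
         ((split_ext G Q p \<or> central_ext N G i) \<longrightarrow>
            free_subgroup_rank G = free_subgroup_rank Q)"
proof -
  have "free_subgroup_rank G \<le> free_subgroup_rank Q"
    by (rule free_subgroup_rank_mono) (rule short_exact_F2_power_embeds_quotient[OF assms])
  moreover have "free_subgroup_rank Q \<le> free_subgroup_rank G" if "split_ext G Q p \<or> central_ext N G i"
    using that split_ext_F2_power_embeds central_ext_F2_power_embeds[OF assms(1)]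
    by (intro free_subgroup_rank_mono) blast
  ultimately show ?thesis
    by auto
qed

end
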